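(* Let $n\ge 2$, $p\ge 1$, $B\ge 1$ and $\theta\in[0,1]$, and consider the Complementary Pairs Stability Selection set $\hat S^{\mathrm{CPSS}}_{n,\tau}$, the sets $L_\theta$, $H_\theta$ and the procedures $\hat S_{\lfloor n/2\rfloor}$ described in the context. Then: (i) If $\tau\in(\tfrac12,1]$, then \[\mathbb{E}|\hat S^{\mathrm{CPSS}}_{n,\tau}\cap L_\theta|\le \frac{\theta}{2\tau-1}\,\mathbb{E}|\hat S_{\lfloor n/2\rfloor}\cap L_\theta|.\] (ii) Let $\hat N^{\mathrm{CPSS}}_{n,\tau}=\{1,\dots,p\}\setminus \hat S^{\mathrm{CPSS}}_{n,\tau}$ and $\hat N_{m}=\{1,\dots,p\}\setminus \hat S_{m}$. If $\tau\in[0,\tfrac12)$, then \[\mathbb{E}|\hat N^{\mathrm{CPSS}}_{n,\tau}\cap H_\theta|\le \frac{1-\theta}{1-2\tau}\,\mathbb{E}|\hat N_{\lfloor n/2\rfloor}\cap H_\theta|.\]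
   Context: Let $Z_1,\dots,Z_n$ be independent and identically distributed random elements. A variable selection procedure is a family of statistics $\hat S_m=\hat S_m(Z_1,\dots,Z_m)$, $m\ge1$, each taking values in the set of subsets of $\{1,\dots,p\}$. For $A=\{i_1<\dots<i_{|A|}\}\subseteq\{1,\dots,n\}$ write $\hat S(A):=\hat S_{|A|}(Z_{i_1},\dots,Z_{i_{|A|}})$. The selection probability of $k\in\{1,\dots,p\}$ is $p_{k,m}:=\mathbb{P}(k\in\hat S_m)$, where $\hat S_m=\hat S_m(Z_1,\dots,Z_m)$. Let $\{(A_{2j-1},A_{2j}):j=1,\dots,B\}$ be randomly chosen pairs of subsets of $\{1,\dots,n\}$, each subset of size $\lfloor n/2\rfloor$, with $A_{2j-1}\cap A_{2j}=\emptyset$, the pairs being independent of each other and of the data. Define $\hat\Pi_B(k):=\frac{1}{2B}\sum_{j=1}^{2B}\mathbb{1}_{\{k\in\hat S(A_j)\}}$ and, for $\tau\in[0,1]$, $\hat S^{\mathrm{CPSS}}_{n,\tau}:=\{k:\hat\Pi_B(k)\ge\tau\}$. For $\theta\in[0,1]$ let $L_\theta=\{k:p_{k,\lfloor n/2\rfloor}\le\theta\}$ and $H_\theta=\{k:p_{k,\lfloor n/2\rfloor}>\theta\}$. *)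

theory Defs
  imports "HOL-Probability.Probability"
begin

(* Data Z :: nat => 'a => 'b, indexed 1..n.  A selection procedure is a family
   S m :: (nat => 'b) => nat set, where S m is applied to the vector
   (z_0,...,z_{m-1}) (restricted to {..<m}).
   S(A) for A = {i_1 < ... < i_|A|} is S |A| (Z_{i_1},...,Z_{i_|A|}). *)
definition subsample_sel ::
  "(nat \<Rightarrow> (nat \<Rightarrow> 'b) \<Rightarrow> nat set) \<Rightarrow> (nat \<Rightarrow> 'a \<Rightarrow> 'b) \<Rightarrow> nat set \<Rightarrow> 'a \<Rightarrow> nat set" where
  "subsample_sel S Z A \<omega> =
     S (card A) (\<lambda>i\<in>{..<card A}. Z (sorted_list_of_set A ! i) \<omega>)"

definition sel_prob ::
  "'a measure \<Rightarrow> (nat \<Rightarrow> (nat \<Rightarrow> 'b) \<Rightarrow> nat set) \<Rightarrow> (nat \<Rightarrow> 'a \<Rightarrow> 'b) \<Rightarrow> nat \<Rightarrow> nat \<Rightarrow> real" where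
  "sel_prob M S Z k m = measure M {\<omega> \<in> space M. k \<in> subsample_sel S Z {1..m} \<omega>}"

definition Pi_hat ::
  "(nat \<Rightarrow> (nat \<Rightarrow> 'b) \<Rightarrow> nat set) \<Rightarrow> (nat \<Rightarrow> 'a \<Rightarrow> 'b) \<Rightarrow> (nat \<Rightarrow> 'a \<Rightarrow> nat set) \<Rightarrow> nat \<Rightarrow> nat \<Rightarrow> 'a \<Rightarrow> real" where
  "Pi_hat S Z A B k \<omega> =
     (\<Sum>j=1..2*B. if k \<in> subsample_sel S Z (A j \<omega>) \<omega> then 1 else 0) / real (2*B)"

definition cpss ::
  "nat \<Rightarrow> (nat \<Rightarrow> (nat \<Rightarrow> 'b) \<Rightarrow> nat set) \<Rightarrow> (nat \<Rightarrow> 'a \<Rightarrow> 'b) \<Rightarrow> (nat \<Rightarrow> 'a \<Rightarrow> nat set) \<Rightarrow> nat \<Rightarrow> real \<Rightarrow> 'a \<Rightarrow> nat set" where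
  "cpss p S Z A B \<tau> \<omega> = {k \<in> {1..p}. \<tau> \<le> Pi_hat S Z A B k \<omega>}"

definition L_set ::
  "'a measure \<Rightarrow> (nat \<Rightarrow> (nat \<Rightarrow> 'b) \<Rightarrow> nat set) \<Rightarrow> (nat \<Rightarrow> 'a \<Rightarrow> 'b) \<Rightarrow> nat \<Rightarrow> nat \<Rightarrow> real \<Rightarrow> nat set" where
  "L_set M S Z n p \<theta> = {k \<in> {1..p}. sel_prob M S Z k (n div 2) \<le> \<theta>}"

definition H_set ::
  "'a measure \<Rightarrow> (nat \<Rightarrow> (nat \<Rightarrow> 'b) \<Rightarrow> nat set) \<Rightarrow> (nat \<Rightarrow> 'a \<Rightarrow> 'b) \<Rightarrow> nat \<Rightarrow> nat \<Rightarrow> real \<Rightarrow> nat set" where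
  "H_set M S Z n p \<theta> = {k \<in> {1..p}. sel_prob M S Z k (n div 2) > \<theta>}"

definition indep_rv :: "'a measure \<Rightarrow> 'c measure \<Rightarrow> ('a \<Rightarrow> 'c) \<Rightarrow> 'd measure \<Rightarrow> ('a \<Rightarrow> 'd) \<Rightarrow> bool" where
  "indep_rv M Ma X Mb Y \<longleftrightarrow>
     (\<forall>a\<in>sets Ma. \<forall>b\<in>sets Mb.
        measure M (X -` a \<inter> Y -` b \<inter> space M)
        = measure M (X -` a \<inter> space M) * measure M (Y -` b \<inter> space M))"

end

theory Submission
  imports Defs
begin

(* If a fraction at least \<tau> > 1/2 of the 2B subsamples select k, then, since x + y \<le> 1 + x y
   for x, y \<in> [0, 1], at least B (2 \<tau> - 1) of the B complementary pairs select k in both halves.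
   The two halves of a pair are disjoint, hence independent i.i.d. subsamples, and the splitting is
   independent of the data, so both select k with probability p_k^2; Markov's inequality gives
   P(k \<in> S^CPSS) \<le> p_k^2 / (2 \<tau> - 1), and summing p_k^2 \<le> \<theta> p_k over k \<in> L_\<theta> yields (i).
   Part (ii) is the same argument applied to the events of not being selected. *)

lemma sum_le_pairs_plus_products:
  fixes x :: "nat \<Rightarrow> real"
  assumes "\<And>j. 0 \<le> x j" and "\<And>j. x j \<le> 1"
  shows "(\<Sum>j=1..2*B. x j) \<le> real B + (\<Sum>j=1..B. x (2*j-1) * x (2*j))"
proof (induction B)
  case 0
  then show ?case by simp
next
  case (Suc B)
  let ?a = "x (Suc (2*B))" and ?b = "x (Suc (Suc (2*B)))"
  have "{1..2*Suc B} = insert (Suc (Suc (2*B))) (insert (Suc (2*B)) {1..2*B})"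
    by auto
  then have "(\<Sum>j=1..2*Suc B. x j) = ?a + ?b + (\<Sum>j=1..2*B. x j)"
    by (simp add: algebra_simps)
  moreover have "?a + ?b \<le> 1 + ?a * ?b"
    \<comment> \<open>equivalent to \<open>0 \<le> (1 - ?a) * (1 - ?b)\<close>\<close>
    using mult_nonneg_nonneg[of "1 - ?a" "1 - ?b"] assms by (simp add: algebra_simps)
  ultimately show ?case
    using Suc.IH by simp
qed

lemma (in prob_space) prob_pair_fraction_ge:
  fixes E :: "nat \<Rightarrow> 'a set" and r t :: real
  assumes B: "B \<ge> 1" and t: "1/2 < t"
    and E: "\<And>j. j \<in> {1..2*B} \<Longrightarrow> E j \<in> events"
    and pairs: "\<And>j. j \<in> {1..B} \<Longrightarrow> prob (E (2*j-1) \<inter> E (2*j)) \<le> r"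
  shows "prob {\<omega> \<in> space M. t \<le> (\<Sum>j=1..2*B. indicator (E j) \<omega>) / real (2*B)} \<le> r / (2*t - 1)"
proof -
  define u where "u \<omega> = (\<Sum>j=1..B. indicator (E (2*j-1) \<inter> E (2*j)) \<omega> :: real)" for \<omega>
  define c where "c = real B * (2*t - 1)"
  have c: "0 < c"
    using B t by (simp add: c_def)
  have pair_events: "E (2*j-1) \<inter> E (2*j) \<in> events" if "j \<in> {1..B}" for j
  proof -
    have "2*j-1 \<in> {1..2*B}" "2*j \<in> {1..2*B}"
      using that by auto
    then show ?thesis
      by (intro sets.Int E)
  qed
  have u_int: "integrable M u"
    unfolding u_def using pair_events
    by (intro Bochner_Integration.integrable_sum integrable_real_indicator) (auto simp: less_top[symmetric])
  have "(\<integral>\<omega>. u \<omega> \<partial>M) = (\<Sum>j=1..B. prob (E (2*j-1) \<inter> E (2*j)))"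
    unfolding u_def using pair_events
    by (subst Bochner_Integration.integral_sum) (auto intro!: integrable_real_indicator simp: less_top[symmetric])
  also have "\<dots> \<le> real B * r"
    using sum_bounded_above[of "{1..B}" _ r] pairs by simp
  finally have int_u: "(\<integral>\<omega>. u \<omega> \<partial>M) \<le> real B * r" .
  have "{\<omega> \<in> space M. t \<le> (\<Sum>j=1..2*B. indicator (E j) \<omega>) / real (2*B)} \<subseteq> {\<omega> \<in> space M. c \<le> u \<omega>}"
  proof safe
    fix \<omega> assume \<omega>: "\<omega> \<in> space M" and "t \<le> (\<Sum>j=1..2*B. indicator (E j) \<omega>) / real (2*B)"
    then have "t * real (2*B) \<le> (\<Sum>j=1..2*B. indicator (E j) \<omega>)"
      using B by (simp add: pos_le_divide_eq)
    also have "\<dots> \<le> real B + u \<omega>"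
      unfolding u_def indicator_inter_arith
      by (rule sum_le_pairs_plus_products) (simp_all add: indicator_def)
    finally show "c \<le> u \<omega>"
      by (simp add: c_def algebra_simps)
  qed
  then have "prob {\<omega> \<in> space M. t \<le> (\<Sum>j=1..2*B. indicator (E j) \<omega>) / real (2*B)}
      \<le> prob {\<omega> \<in> space M. c \<le> u \<omega>}"
    using u_int by (intro finite_measure_mono) auto
  also have "\<dots> \<le> (\<integral>\<omega>. u \<omega> \<partial>M) / c"
    using c by (intro integral_Markov_inequality_measure[where A="space M", OF u_int])
      (auto simp: u_def intro!: sum_nonneg)
  also have "\<dots> \<le> real B * r / c"
    using int_u c by (simp add: divide_right_mono)
  also have "\<dots> = r / (2*t - 1)"
    using B by (simp add: c_def)
  finally show ?thesis .
qed

lemma (in prob_space) expectation_card_Int: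
  assumes L: "finite L" and C: "\<And>k. k \<in> L \<Longrightarrow> {\<omega> \<in> space M. k \<in> C \<omega>} \<in> events"
  shows "(\<integral>\<omega>. real (card (C \<omega> \<inter> L)) \<partial>M) = (\<Sum>k\<in>L. prob {\<omega> \<in> space M. k \<in> C \<omega>})"
proof -
  have "(\<integral>\<omega>. real (card (C \<omega> \<inter> L)) \<partial>M) = (\<integral>\<omega>. (\<Sum>k\<in>L. indicator {\<omega> \<in> space M. k \<in> C \<omega>} \<omega>) \<partial>M)"
  proof (rule Bochner_Integration.integral_cong[OF refl])
    fix \<omega> assume "\<omega> \<in> space M"
    then have "(\<Sum>k\<in>L. indicator {\<omega> \<in> space M. k \<in> C \<omega>} \<omega> :: real) = (\<Sum>k\<in>L \<inter> C \<omega>. 1)"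
      using L by (simp add: indicator_def sum.If_cases Int_commute)
    then show "real (card (C \<omega> \<inter> L)) = (\<Sum>k\<in>L. indicator {\<omega> \<in> space M. k \<in> C \<omega>} \<omega>)"
      by (simp add: Int_commute)
  qed
  also have "\<dots> = (\<Sum>k\<in>L. prob {\<omega> \<in> space M. k \<in> C \<omega>})"
    using C by (subst Bochner_Integration.integral_sum)
      (auto intro!: integrable_real_indicator simp: less_top[symmetric])
  finally show ?thesis .
qed

lemma (in prob_space) expectation_card_Int_le:
  assumes L: "finite L" and c: "0 < c"
    and C: "\<And>k. k \<in> L \<Longrightarrow> {\<omega> \<in> space M. k \<in> C \<omega>} \<in> events"
    and S: "\<And>k. k \<in> L \<Longrightarrow> {\<omega> \<in> space M. k \<in> S \<omega>} \<in> events"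
    and sq: "\<And>k. k \<in> L \<Longrightarrow>
               prob {\<omega> \<in> space M. k \<in> C \<omega>} \<le> (prob {\<omega> \<in> space M. k \<in> S \<omega>})^2 / c"
    and \<theta>: "\<And>k. k \<in> L \<Longrightarrow> prob {\<omega> \<in> space M. k \<in> S \<omega>} \<le> \<theta>"
  shows "(\<integral>\<omega>. real (card (C \<omega> \<inter> L)) \<partial>M) \<le> \<theta> / c * (\<integral>\<omega>. real (card (S \<omega> \<inter> L)) \<partial>M)"
proof -
  have "(\<Sum>k\<in>L. prob {\<omega> \<in> space M. k \<in> C \<omega>}) \<le> (\<Sum>k\<in>L. \<theta> / c * prob {\<omega> \<in> space M. k \<in> S \<omega>})"
  proof (rule sum_mono)
    fix k assume k: "k \<in> L"
    let ?q = "prob {\<omega> \<in> space M. k \<in> S \<omega>}"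
    have "?q * ?q \<le> \<theta> * ?q"
      using \<theta>[OF k] by (intro mult_right_mono) auto
    then show "prob {\<omega> \<in> space M. k \<in> C \<omega>} \<le> \<theta> / c * ?q"
      using sq[OF k] c by (simp add: power2_eq_square divide_right_mono order_trans)
  qed
  then show ?thesis
    using L C S by (simp add: expectation_card_Int sum_distrib_left)
qed

lemma (in prob_space) events_Collect_finite_index:
  assumes P: "finite P"
    and K: "\<And>p. p \<in> P \<Longrightarrow> {\<omega> \<in> space M. K \<omega> = p} \<in> events" "\<And>\<omega>. \<omega> \<in> space M \<Longrightarrow> K \<omega> \<in> P"
    and G: "\<And>p. p \<in> P \<Longrightarrow> G p \<in> events"
  shows "{\<omega> \<in> space M. \<omega> \<in> G (K \<omega>)} \<in> events"
proof -
  have "{\<omega> \<in> space M. \<omega> \<in> G (K \<omega>)} = (\<Union>p\<in>P. {\<omega> \<in> space M. K \<omega> = p} \<inter> G p)"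
    using K(2) by auto
  then show ?thesis
    using P K(1) G by auto
qed

lemma (in prob_space) prob_Collect_finite_index:
  assumes P: "finite P"
    and K: "\<And>p. p \<in> P \<Longrightarrow> {\<omega> \<in> space M. K \<omega> = p} \<in> events" "\<And>\<omega>. \<omega> \<in> space M \<Longrightarrow> K \<omega> \<in> P"
    and G: "\<And>p. p \<in> P \<Longrightarrow> G p \<in> events"
    and indep: "\<And>p. p \<in> P \<Longrightarrow> prob ({\<omega> \<in> space M. K \<omega> = p} \<inter> G p) = prob {\<omega> \<in> space M. K \<omega> = p} * g"
  shows "prob {\<omega> \<in> space M. \<omega> \<in> G (K \<omega>)} = g"
proof -
  have disj: "disjoint_family_on (\<lambda>p. {\<omega> \<in> space M. K \<omega> = p} \<inter> G p) P"
    "disjoint_family_on (\<lambda>p. {\<omega> \<in> space M. K \<omega> = p}) P"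
    by (auto simp: disjoint_family_on_def)
  have "{\<omega> \<in> space M. \<omega> \<in> G (K \<omega>)} = (\<Union>p\<in>P. {\<omega> \<in> space M. K \<omega> = p} \<inter> G p)"
    using K(2) by auto
  then have "prob {\<omega> \<in> space M. \<omega> \<in> G (K \<omega>)} = prob (\<Union>p\<in>P. {\<omega> \<in> space M. K \<omega> = p} \<inter> G p)"
    by simp
  also have "\<dots> = (\<Sum>p\<in>P. prob ({\<omega> \<in> space M. K \<omega> = p} \<inter> G p))"
    using P K(1) G disj(1) by (intro finite_measure_finite_Union) auto
  also have "\<dots> = (\<Sum>p\<in>P. prob {\<omega> \<in> space M. K \<omega> = p}) * g"
    using indep by (simp add: sum_distrib_right)
  also have "(\<Sum>p\<in>P. prob {\<omega> \<in> space M. K \<omega> = p}) = prob (\<Union>p\<in>P. {\<omega> \<in> space M. K \<omega> = p})"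
    using P K(1) disj(2) by (intro finite_measure_finite_Union[symmetric]) auto
  also have "(\<Union>p\<in>P. {\<omega> \<in> space M. K \<omega> = p}) = space M"
    using K(2) by auto
  finally show ?thesis
    by (simp add: prob_space)
qed

definition sorted_reindex :: "nat set \<Rightarrow> (nat \<Rightarrow> 'b) \<Rightarrow> nat \<Rightarrow> 'b" where
  "sorted_reindex a x = (\<lambda>i\<in>{..<card a}. x (sorted_list_of_set a ! i))"

definition subsample :: "(nat \<Rightarrow> 'a \<Rightarrow> 'b) \<Rightarrow> nat set \<Rightarrow> 'a \<Rightarrow> nat \<Rightarrow> 'b" where
  "subsample Z a \<omega> = sorted_reindex a (\<lambda>i. Z i \<omega>)"

lemma subsample_sel_eq: "subsample_sel S Z a \<omega> = S (card a) (subsample Z a \<omega>)"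
  by (simp add: subsample_sel_def subsample_def sorted_reindex_def)

lemma sorted_list_of_set_nth_mem: "finite a \<Longrightarrow> i < card a \<Longrightarrow> sorted_list_of_set a ! i \<in> a"
  using nth_mem[of i "sorted_list_of_set a"] by simp

lemma sorted_reindex_restrict:
  "finite a \<Longrightarrow> a \<subseteq> I \<Longrightarrow> sorted_reindex a (restrict x I) = sorted_reindex a x"
  unfolding sorted_reindex_def using sorted_list_of_set_nth_mem by (intro restrict_ext) auto

lemma measurable_sorted_reindex:
  assumes "finite a" "a \<subseteq> I"
  shows "sorted_reindex a \<in> PiM I (\<lambda>_. K) \<rightarrow>\<^sub>M PiM {..<card a} (\<lambda>_. K)"
  unfolding sorted_reindex_def
proof (rule measurable_restrict)
  fix i assume "i \<in> {..<card a}"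
  then have "sorted_list_of_set a ! i \<in> I"
    using sorted_list_of_set_nth_mem assms by auto
  then show "(\<lambda>x. x (sorted_list_of_set a ! i)) \<in> PiM I (\<lambda>_. K) \<rightarrow>\<^sub>M K"
    by (rule measurable_component_singleton)
qed

lemma sets_Collect_sorted_reindex:
  assumes "finite a" "a \<subseteq> I" "F \<in> sets (PiM {..<card a} (\<lambda>_. K))"
  shows "{x \<in> space (PiM I (\<lambda>_. K)). sorted_reindex a x \<in> F} \<in> sets (PiM I (\<lambda>_. K))"
  using measurable_sets[OF measurable_sorted_reindex[OF assms(1,2)] assms(3)]
  by (simp add: vimage_def Int_def conj_commute)

lemma distr_sorted_reindex:
  assumes "finite a" "prob_space K"
  shows "distr (PiM a (\<lambda>_. K)) (PiM {..<card a} (\<lambda>_. K)) (sorted_reindex a) = PiM {..<card a} (\<lambda>_. K)"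
  unfolding sorted_reindex_def using assms sorted_list_of_set_nth_mem
  by (intro distr_PiM_reindex inj_on_nth) auto

locale iid_sample = prob_space M for M :: "'a measure" +
  fixes N :: "'b measure" and Z :: "nat \<Rightarrow> 'a \<Rightarrow> 'b" and n :: nat
  assumes Z_meas: "\<And>i. i \<in> {1..n} \<Longrightarrow> Z i \<in> M \<rightarrow>\<^sub>M N"
    and Z_indep: "indep_vars (\<lambda>_. N) Z {1..n}"
    and Z_ident: "\<And>i. i \<in> {1..n} \<Longrightarrow> distr M N (Z i) = distr M N (Z 1)"
begin

definition Z_law :: "'b measure" where
  "Z_law = distr M N (Z 1)"

lemma subsample_eq_sorted_reindex_restrict:
  assumes "a \<subseteq> {1..n}"
  shows "subsample Z a \<omega> = sorted_reindex a (\<lambda>i\<in>a. Z i \<omega>)"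
proof -
  have "finite a"
    using assms by (rule finite_subset) simp
  then show ?thesis
    unfolding subsample_def by (simp add: sorted_reindex_restrict)
qed

lemma measurable_subsample:
  assumes "a \<subseteq> {1..n}"
  shows "subsample Z a \<in> M \<rightarrow>\<^sub>M PiM {..<card a} (\<lambda>_. N)"
proof -
  have "finite a"
    using assms by (rule finite_subset) simp
  then have "(\<lambda>\<omega>. sorted_reindex a (\<lambda>i\<in>a. Z i \<omega>)) \<in> M \<rightarrow>\<^sub>M PiM {..<card a} (\<lambda>_. N)"
    using assms
    by (intro measurable_compose[OF measurable_restrict measurable_sorted_reindex] Z_meas) auto
  moreover have "subsample Z a = (\<lambda>\<omega>. sorted_reindex a (\<lambda>i\<in>a. Z i \<omega>))"
    using assms by (intro ext subsample_eq_sorted_reindex_restrict)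
  ultimately show ?thesis
    by simp
qed

lemma events_subsample_in:
  assumes "a \<subseteq> {1..n}" and "F \<in> sets (PiM {..<card a} (\<lambda>_. N))"
  shows "{\<omega> \<in> space M. subsample Z a \<omega> \<in> F} \<in> events"
  using measurable_sets[OF measurable_subsample[OF assms(1)] assms(2)]
  by (simp add: vimage_def Int_def conj_commute)

lemma distr_subsample:
  assumes a: "a \<subseteq> {1..n}" "a \<noteq> {}"
  shows "distr M (PiM {..<card a} (\<lambda>_. N)) (subsample Z a) = PiM {..<card a} (\<lambda>_. Z_law)"
proof -
  have fin: "finite a"
    using a(1) by (rule finite_subset) simp
  have law: "prob_space Z_law" "sets Z_law = sets N"
    unfolding Z_law_def using a by (auto intro!: prob_space_distr Z_meas)
  have "distr M (PiM a (\<lambda>_. N)) (\<lambda>\<omega>. \<lambda>i\<in>a. Z i \<omega>) = PiM a (\<lambda>i. distr M N (Z i))"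
    using a Z_meas indep_vars_subset[OF Z_indep a(1)]
    by (subst indep_vars_iff_distr_eq_PiM'[symmetric]) auto
  also have "\<dots> = PiM a (\<lambda>_. Z_law)"
    unfolding Z_law_def by (intro PiM_cong refl) (use a Z_ident in blast)
  finally have restr: "distr M (PiM a (\<lambda>_. N)) (\<lambda>\<omega>. \<lambda>i\<in>a. Z i \<omega>) = PiM a (\<lambda>_. Z_law)" .
  have "distr M (PiM {..<card a} (\<lambda>_. N)) (subsample Z a)
      = distr M (PiM {..<card a} (\<lambda>_. N)) (sorted_reindex a \<circ> (\<lambda>\<omega>. \<lambda>i\<in>a. Z i \<omega>))"
    using a by (intro distr_cong) (auto simp: subsample_eq_sorted_reindex_restrict)
  also have "\<dots> = distr (PiM a (\<lambda>_. Z_law)) (PiM {..<card a} (\<lambda>_. N)) (sorted_reindex a)"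
    unfolding restr[symmetric] using a fin
    by (intro distr_distr[symmetric] measurable_sorted_reindex measurable_restrict Z_meas) auto
  also have "\<dots> = distr (PiM a (\<lambda>_. Z_law)) (PiM {..<card a} (\<lambda>_. Z_law)) (sorted_reindex a)"
    using law by (intro distr_cong sets_PiM_cong) auto
  also have "\<dots> = PiM {..<card a} (\<lambda>_. Z_law)"
    using fin law(1) by (rule distr_sorted_reindex)
  finally show ?thesis .
qed

lemma prob_subsample_in:
  assumes a: "a \<subseteq> {1..n}" "a \<noteq> {}" and F: "F \<in> sets (PiM {..<card a} (\<lambda>_. N))"
  shows "prob {\<omega> \<in> space M. subsample Z a \<omega> \<in> F} = measure (PiM {..<card a} (\<lambda>_. Z_law)) F"
proof -
  have "prob {\<omega> \<in> space M. subsample Z a \<omega> \<in> F}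
      = measure (distr M (PiM {..<card a} (\<lambda>_. N)) (subsample Z a)) F"
    using measurable_subsample[OF a(1)] F by (subst measure_distr) (auto intro!: arg_cong[where f=prob])
  then show ?thesis
    using distr_subsample[OF a] by simp
qed

lemma indep_var_subsample:
  assumes "a \<subseteq> {1..n}" "b \<subseteq> {1..n}" "a \<inter> b = {}"
  shows "indep_var (PiM {..<card a} (\<lambda>_. N)) (subsample Z a) (PiM {..<card b} (\<lambda>_. N)) (subsample Z b)"
proof -
  have fin: "finite a" "finite b"
    using assms(1,2) by (auto intro: finite_subset)
  have "indep_var (PiM {..<card a} (\<lambda>_. N)) (sorted_reindex a \<circ> (\<lambda>\<omega>. \<lambda>i\<in>a. Z i \<omega>))
      (PiM {..<card b} (\<lambda>_. N)) (sorted_reindex b \<circ> (\<lambda>\<omega>. \<lambda>i\<in>b. Z i \<omega>))"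
    using assms fin
    by (intro indep_var_compose[OF indep_var_restrict[OF Z_indep]] measurable_sorted_reindex) auto
  moreover have "sorted_reindex c \<circ> (\<lambda>\<omega>. \<lambda>i\<in>c. Z i \<omega>) = subsample Z c" if "c \<subseteq> {1..n}" for c
    using that by (auto simp: subsample_eq_sorted_reindex_restrict)
  ultimately show ?thesis
    using assms by simp
qed

lemma prob_subsamples_in:
  assumes a: "a \<subseteq> {1..n}" "card a = m" and b: "b \<subseteq> {1..n}" "card b = m" and "a \<inter> b = {}" "m \<noteq> 0"
    and F: "F \<in> sets (PiM {..<m} (\<lambda>_. N))" and G: "G \<in> sets (PiM {..<m} (\<lambda>_. N))"
  shows "prob {\<omega> \<in> space M. subsample Z a \<omega> \<in> F \<and> subsample Z b \<omega> \<in> G}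
       = measure (PiM {..<m} (\<lambda>_. Z_law)) F * measure (PiM {..<m} (\<lambda>_. Z_law)) G"
proof -
  have "a \<noteq> {}" "b \<noteq> {}"
    using assms by auto
  then show ?thesis
    using assms indep_var_subsample[OF a(1) b(1)] prob_subsample_in[of a F] prob_subsample_in[of b G]
    by (simp add: prob_indep_random_variable)
qed

end

locale complementary_subsamples = iid_sample +
  fixes A :: "nat \<Rightarrow> 'a \<Rightarrow> nat set" and B :: nat
  assumes n2: "n \<ge> 2" and B1: "B \<ge> 1"
    and A_meas: "\<And>j. j \<in> {1..2*B} \<Longrightarrow> A j \<in> M \<rightarrow>\<^sub>M count_space UNIV"
    and A_sub: "\<And>j \<omega>. j \<in> {1..2*B} \<Longrightarrow> \<omega> \<in> space M \<Longrightarrow> A j \<omega> \<subseteq> {1..n}"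
    and A_card: "\<And>j \<omega>. j \<in> {1..2*B} \<Longrightarrow> \<omega> \<in> space M \<Longrightarrow> card (A j \<omega>) = n div 2"
    and A_disj: "\<And>j \<omega>. j \<in> {1..B} \<Longrightarrow> \<omega> \<in> space M \<Longrightarrow> A (2*j - 1) \<omega> \<inter> A (2*j) \<omega> = {}"
    and A_Z_indep: "indep_rv M
                      (PiM {1..n} (\<lambda>_. N)) (\<lambda>\<omega>. \<lambda>i\<in>{1..n}. Z i \<omega>)
                      (PiM {1..2*B} (\<lambda>_. count_space UNIV)) (\<lambda>\<omega>. \<lambda>j\<in>{1..2*B}. A j \<omega>)"
begin

lemma events_A_eq: "j \<in> {1..2*B} \<Longrightarrow> {\<omega> \<in> space M. A j \<omega> = a} \<in> events"
  using measurable_sets[OF A_meas, of j "{a}"] by (simp add: vimage_def Int_def conj_commute)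

lemma events_subsample_A_in:
  assumes j: "j \<in> {1..2*B}" and F: "F \<in> sets (PiM {..<n div 2} (\<lambda>_. N))"
  shows "{\<omega> \<in> space M. subsample Z (A j \<omega>) \<omega> \<in> F} \<in> events"
proof -
  define G where "G a = {\<omega> \<in> space M. subsample Z a \<omega> \<in> F}" for a
  have "{\<omega> \<in> space M. \<omega> \<in> G (A j \<omega>)} \<in> events"
  proof (rule events_Collect_finite_index[where P="{a. a \<subseteq> {1..n} \<and> card a = n div 2}"])
    show "finite {a. a \<subseteq> {1..n} \<and> card a = n div 2}"
      by (rule finite_subset[of _ "Pow {1..n}"]) auto
    show "G a \<in> events" if "a \<in> {a. a \<subseteq> {1..n} \<and> card a = n div 2}" for a
      using that F by (simp add: G_def events_subsample_in)
  qed (use j A_sub A_card events_A_eq in auto)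
  then show ?thesis
    by (simp add: G_def)
qed

lemma prob_A_Z_indep:
  assumes "X \<in> sets (PiM {1..n} (\<lambda>_. N))" and "Y \<in> sets (PiM {1..2*B} (\<lambda>_. count_space UNIV))"
  shows "prob {\<omega> \<in> space M. (\<lambda>i\<in>{1..n}. Z i \<omega>) \<in> X \<and> (\<lambda>j\<in>{1..2*B}. A j \<omega>) \<in> Y}
       = prob {\<omega> \<in> space M. (\<lambda>i\<in>{1..n}. Z i \<omega>) \<in> X} * prob {\<omega> \<in> space M. (\<lambda>j\<in>{1..2*B}. A j \<omega>) \<in> Y}"
  using A_Z_indep assms unfolding indep_rv_def by (simp add: vimage_def Int_def conj_commute conj_left_commute)

lemma prob_A_eq_subsamples_in:
  assumes j: "j \<in> {1..B}" and a: "a \<subseteq> {1..n}" "card a = n div 2" and b: "b \<subseteq> {1..n}" "card b = n div 2"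
    and ab: "a \<inter> b = {}" and F: "F \<in> sets (PiM {..<n div 2} (\<lambda>_. N))"
  shows "prob {\<omega> \<in> space M. (A (2*j-1) \<omega>, A (2*j) \<omega>) = (a, b) \<and> subsample Z a \<omega> \<in> F \<and> subsample Z b \<omega> \<in> F}
       = prob {\<omega> \<in> space M. (A (2*j-1) \<omega>, A (2*j) \<omega>) = (a, b)} * (measure (PiM {..<n div 2} (\<lambda>_. Z_law)) F)^2"
proof -
  have j': "2*j-1 \<in> {1..2*B}" "2*j \<in> {1..2*B}"
    using j by auto
  define X where "X = {x \<in> space (PiM {1..n} (\<lambda>_. N)). sorted_reindex a x \<in> F \<and> sorted_reindex b x \<in> F}"
  define Y where "Y = {y \<in> space (PiM {1..2*B} (\<lambda>_. count_space UNIV)). y (2*j-1) = a \<and> y (2*j) = b}"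
  have fin: "finite a" "finite b"
    using a(1) b(1) by (auto intro: finite_subset)
  have "X = {x \<in> space (PiM {1..n} (\<lambda>_. N)). sorted_reindex a x \<in> F}
      \<inter> {x \<in> space (PiM {1..n} (\<lambda>_. N)). sorted_reindex b x \<in> F}"
    by (auto simp: X_def)
  then have X_sets: "X \<in> sets (PiM {1..n} (\<lambda>_. N))"
    using sets_Collect_sorted_reindex[of a "{1..n}" F N] sets_Collect_sorted_reindex[of b "{1..n}" F N] fin a b F
    by auto
  have Y_sets: "Y \<in> sets (PiM {1..2*B} (\<lambda>_. count_space UNIV))"
    unfolding Y_def using j' by measurable
  have sample: "(\<lambda>i\<in>{1..n}. Z i \<omega>) \<in> space (PiM {1..n} (\<lambda>_. N))" if "\<omega> \<in> space M" for \<omega>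
    using that by (auto simp: space_PiM intro!: measurable_space[OF Z_meas])
  have X_iff: "(\<lambda>i\<in>{1..n}. Z i \<omega>) \<in> X \<longleftrightarrow> subsample Z a \<omega> \<in> F \<and> subsample Z b \<omega> \<in> F" if "\<omega> \<in> space M" for \<omega>
    using sample[OF that] fin a b by (simp add: X_def subsample_def sorted_reindex_restrict)
  have Y_iff: "(\<lambda>j\<in>{1..2*B}. A j \<omega>) \<in> Y \<longleftrightarrow> (A (2*j-1) \<omega>, A (2*j) \<omega>) = (a, b)" for \<omega>
    using j' by (simp add: Y_def space_PiM)
  have "prob {\<omega> \<in> space M. (A (2*j-1) \<omega>, A (2*j) \<omega>) = (a, b) \<and> subsample Z a \<omega> \<in> F \<and> subsample Z b \<omega> \<in> F}
      = prob {\<omega> \<in> space M. (\<lambda>i\<in>{1..n}. Z i \<omega>) \<in> X \<and> (\<lambda>j\<in>{1..2*B}. A j \<omega>) \<in> Y}"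
    using X_iff Y_iff by (intro arg_cong[where f=prob]) auto
  also have "\<dots> = prob {\<omega> \<in> space M. (\<lambda>i\<in>{1..n}. Z i \<omega>) \<in> X} * prob {\<omega> \<in> space M. (\<lambda>j\<in>{1..2*B}. A j \<omega>) \<in> Y}"
    by (rule prob_A_Z_indep[OF X_sets Y_sets])
  also have "prob {\<omega> \<in> space M. (\<lambda>i\<in>{1..n}. Z i \<omega>) \<in> X}
      = prob {\<omega> \<in> space M. subsample Z a \<omega> \<in> F \<and> subsample Z b \<omega> \<in> F}"
    using X_iff by (intro arg_cong[where f=prob]) auto
  also have "prob {\<omega> \<in> space M. (\<lambda>j\<in>{1..2*B}. A j \<omega>) \<in> Y}
      = prob {\<omega> \<in> space M. (A (2*j-1) \<omega>, A (2*j) \<omega>) = (a, b)}"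
    using Y_iff by simp
  also have "prob {\<omega> \<in> space M. subsample Z a \<omega> \<in> F \<and> subsample Z b \<omega> \<in> F}
      = (measure (PiM {..<n div 2} (\<lambda>_. Z_law)) F)^2"
    using prob_subsamples_in[OF a b ab _ F F] n2 by (simp add: power2_eq_square)
  finally show ?thesis
    by simp
qed

lemma prob_subsample_pair:
  assumes j: "j \<in> {1..B}" and F: "F \<in> sets (PiM {..<n div 2} (\<lambda>_. N))"
  shows "prob {\<omega> \<in> space M. subsample Z (A (2*j-1) \<omega>) \<omega> \<in> F \<and> subsample Z (A (2*j) \<omega>) \<omega> \<in> F}
       = (prob {\<omega> \<in> space M. subsample Z {1..n div 2} \<omega> \<in> F})^2"
proof -
  have j': "2*j-1 \<in> {1..2*B}" "2*j \<in> {1..2*B}"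
    using j by auto
  define P where "P = {(a, b). a \<subseteq> {1..n} \<and> card a = n div 2 \<and> b \<subseteq> {1..n} \<and> card b = n div 2 \<and> a \<inter> b = {}}"
  define G where "G = (\<lambda>(a, b). {\<omega> \<in> space M. subsample Z a \<omega> \<in> F \<and> subsample Z b \<omega> \<in> F})"
  define K where "K \<omega> = (A (2*j-1) \<omega>, A (2*j) \<omega>)" for \<omega>
  have "prob {\<omega> \<in> space M. \<omega> \<in> G (K \<omega>)} = (measure (PiM {..<n div 2} (\<lambda>_. Z_law)) F)^2"
  proof (rule prob_Collect_finite_index[where P=P])
    show "finite P"
      by (rule finite_subset[of _ "Pow {1..n} \<times> Pow {1..n}"]) (auto simp: P_def)
    show "K \<omega> \<in> P" if "\<omega> \<in> space M" for \<omega>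
      using that j j' A_sub A_card A_disj by (simp add: K_def P_def)
    fix p assume "p \<in> P"
    then obtain a b where p: "p = (a, b)" and ab: "a \<subseteq> {1..n}" "card a = n div 2" "b \<subseteq> {1..n}" "card b = n div 2" "a \<inter> b = {}"
      by (auto simp: P_def)
    have "{\<omega> \<in> space M. K \<omega> = p} = {\<omega> \<in> space M. A (2*j-1) \<omega> = a} \<inter> {\<omega> \<in> space M. A (2*j) \<omega> = b}"
      by (auto simp: K_def p)
    then show "{\<omega> \<in> space M. K \<omega> = p} \<in> events"
      using events_A_eq j' by auto
    have "G p = {\<omega> \<in> space M. subsample Z a \<omega> \<in> F} \<inter> {\<omega> \<in> space M. subsample Z b \<omega> \<in> F}"
      by (auto simp: G_def p)
    then show "G p \<in> events"
      using ab F events_subsample_in[of a F] events_subsample_in[of b F] by auto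
    have "{\<omega> \<in> space M. K \<omega> = p} \<inter> G p
        = {\<omega> \<in> space M. (A (2*j-1) \<omega>, A (2*j) \<omega>) = (a, b) \<and> subsample Z a \<omega> \<in> F \<and> subsample Z b \<omega> \<in> F}"
      by (auto simp: K_def G_def p)
    then show "prob ({\<omega> \<in> space M. K \<omega> = p} \<inter> G p)
        = prob {\<omega> \<in> space M. K \<omega> = p} * (measure (PiM {..<n div 2} (\<lambda>_. Z_law)) F)^2"
      using prob_A_eq_subsamples_in[OF j ab F] by (simp add: K_def p)
  qed
  moreover have "prob {\<omega> \<in> space M. subsample Z {1..n div 2} \<omega> \<in> F} = measure (PiM {..<n div 2} (\<lambda>_. Z_law)) F"
    using prob_subsample_in[of "{1..n div 2}" F] F n2 by simp
  ultimately show ?thesis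
    by (simp add: K_def G_def)
qed

definition subsample_fraction :: "(nat \<Rightarrow> 'b) set \<Rightarrow> 'a \<Rightarrow> real" where
  "subsample_fraction F \<omega> = (\<Sum>j=1..2*B. indicator {\<omega> \<in> space M. subsample Z (A j \<omega>) \<omega> \<in> F} \<omega>) / real (2*B)"

lemma borel_measurable_subsample_fraction:
  "F \<in> sets (PiM {..<n div 2} (\<lambda>_. N)) \<Longrightarrow> subsample_fraction F \<in> borel_measurable M"
  unfolding subsample_fraction_def
  by (intro borel_measurable_divide borel_measurable_sum borel_measurable_indicator borel_measurable_const
      events_subsample_A_in)

lemma events_subsample_fraction_ge:
  "F \<in> sets (PiM {..<n div 2} (\<lambda>_. N)) \<Longrightarrow> {\<omega> \<in> space M. t \<le> subsample_fraction F \<omega>} \<in> events"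
  using borel_measurable_le[OF borel_measurable_const borel_measurable_subsample_fraction] by simp

lemma subsample_fraction_compl:
  assumes "\<omega> \<in> space M"
  shows "subsample_fraction (space (PiM {..<n div 2} (\<lambda>_. N)) - F) \<omega> = 1 - subsample_fraction F \<omega>"
proof -
  have "subsample Z (A j \<omega>) \<omega> \<in> space (PiM {..<n div 2} (\<lambda>_. N))" if "j \<in> {1..2*B}" for j
    using measurable_space[OF measurable_subsample[OF A_sub[OF that assms]] assms] A_card[OF that assms] by simp
  then have "(\<Sum>j=1..2*B. indicator {\<omega> \<in> space M. subsample Z (A j \<omega>) \<omega> \<in> space (PiM {..<n div 2} (\<lambda>_. N)) - F} \<omega>)
      = (\<Sum>j=1..2*B. 1 - indicator {\<omega> \<in> space M. subsample Z (A j \<omega>) \<omega> \<in> F} \<omega> :: real)"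
    using assms by (intro sum.cong) (auto simp: indicator_def)
  then show ?thesis
    using B1 by (simp add: subsample_fraction_def sum_subtractf diff_divide_distrib)
qed

lemma prob_subsample_fraction_ge:
  assumes t: "1/2 < t" and F: "F \<in> sets (PiM {..<n div 2} (\<lambda>_. N))"
  shows "prob {\<omega> \<in> space M. t \<le> subsample_fraction F \<omega>}
       \<le> (prob {\<omega> \<in> space M. subsample Z {1..n div 2} \<omega> \<in> F})^2 / (2*t - 1)"
  unfolding subsample_fraction_def
proof (rule prob_pair_fraction_ge[OF B1 t])
  show "{\<omega> \<in> space M. subsample Z (A j \<omega>) \<omega> \<in> F} \<in> events" if "j \<in> {1..2*B}" for j
    using that F by (rule events_subsample_A_in)
  fix j assume j: "j \<in> {1..B}"
  have "{\<omega> \<in> space M. subsample Z (A (2*j-1) \<omega>) \<omega> \<in> F} \<inter> {\<omega> \<in> space M. subsample Z (A (2*j) \<omega>) \<omega> \<in> F}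
      = {\<omega> \<in> space M. subsample Z (A (2*j-1) \<omega>) \<omega> \<in> F \<and> subsample Z (A (2*j) \<omega>) \<omega> \<in> F}"
    by auto
  then show "prob ({\<omega> \<in> space M. subsample Z (A (2*j-1) \<omega>) \<omega> \<in> F} \<inter> {\<omega> \<in> space M. subsample Z (A (2*j) \<omega>) \<omega> \<in> F})
      \<le> (prob {\<omega> \<in> space M. subsample Z {1..n div 2} \<omega> \<in> F})^2"
    using prob_subsample_pair[OF j F] by simp
qed

end

locale cpss_setting = complementary_subsamples +
  fixes S :: "nat \<Rightarrow> (nat \<Rightarrow> 'b) \<Rightarrow> nat set"
  assumes S_meas: "\<And>m k. (\<lambda>z. k \<in> S m z) \<in> PiM {..<m} (\<lambda>_. N) \<rightarrow>\<^sub>M count_space UNIV"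
begin

definition selecting :: "nat \<Rightarrow> (nat \<Rightarrow> 'b) set" where
  "selecting k = {z \<in> space (PiM {..<n div 2} (\<lambda>_. N)). k \<in> S (n div 2) z}"

lemma sets_selecting: "selecting k \<in> sets (PiM {..<n div 2} (\<lambda>_. N))"
  using measurable_sets[OF S_meas[of k "n div 2"], of "{True}"]
  by (simp add: selecting_def vimage_def Int_def conj_commute)

lemma subsample_in_selecting_iff:
  assumes "a \<subseteq> {1..n}" "card a = n div 2" "\<omega> \<in> space M"
  shows "subsample Z a \<omega> \<in> selecting k \<longleftrightarrow> k \<in> subsample_sel S Z a \<omega>"
  using measurable_space[OF measurable_subsample[OF assms(1)] assms(3)] assms(2)
  by (simp add: selecting_def subsample_sel_eq)

lemma events_subsample_sel:
  "{\<omega> \<in> space M. k \<in> subsample_sel S Z {1..n div 2} \<omega>} \<in> events"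
proof -
  have "{\<omega> \<in> space M. k \<in> subsample_sel S Z {1..n div 2} \<omega>} = {\<omega> \<in> space M. subsample Z {1..n div 2} \<omega> \<in> selecting k}"
    using subsample_in_selecting_iff[of "{1..n div 2}"] by auto
  then show ?thesis
    using events_subsample_in[of "{1..n div 2}" "selecting k"] sets_selecting by simp
qed

lemma Pi_hat_eq_subsample_fraction:
  assumes "\<omega> \<in> space M"
  shows "Pi_hat S Z A B k \<omega> = subsample_fraction (selecting k) \<omega>"
  unfolding Pi_hat_def subsample_fraction_def
  using assms A_sub A_card subsample_in_selecting_iff by (intro arg_cong2[where f="(/)"] sum.cong) auto

lemma cpss_iff:
  "\<omega> \<in> space M \<Longrightarrow> k \<in> cpss p S Z A B \<tau> \<omega> \<longleftrightarrow> k \<in> {1..p} \<and> \<tau> \<le> subsample_fraction (selecting k) \<omega>"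
  by (simp add: cpss_def Pi_hat_eq_subsample_fraction)

lemma events_cpss: "{\<omega> \<in> space M. k \<in> cpss p S Z A B \<tau> \<omega>} \<in> events"
proof (cases "k \<in> {1..p}")
  case True
  then have "{\<omega> \<in> space M. k \<in> cpss p S Z A B \<tau> \<omega>} = {\<omega> \<in> space M. \<tau> \<le> subsample_fraction (selecting k) \<omega>}"
    using cpss_iff by auto
  then show ?thesis
    using events_subsample_fraction_ge[OF sets_selecting] by simp
next
  case False
  then have "{\<omega> \<in> space M. k \<in> cpss p S Z A B \<tau> \<omega>} = {}"
    by (auto simp: cpss_def)
  then show ?thesis
    by (metis sets.empty_sets)
qed

lemma prob_cpss_le:
  assumes "1/2 < \<tau>"
  shows "prob {\<omega> \<in> space M. k \<in> cpss p S Z A B \<tau> \<omega>} \<le> (sel_prob M S Z k (n div 2))^2 / (2*\<tau> - 1)"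
proof -
  have "prob {\<omega> \<in> space M. k \<in> cpss p S Z A B \<tau> \<omega>} \<le> prob {\<omega> \<in> space M. \<tau> \<le> subsample_fraction (selecting k) \<omega>}"
    using cpss_iff sets_selecting by (intro finite_measure_mono events_subsample_fraction_ge) auto
  also have "\<dots> \<le> (prob {\<omega> \<in> space M. subsample Z {1..n div 2} \<omega> \<in> selecting k})^2 / (2*\<tau> - 1)"
    using assms sets_selecting by (rule prob_subsample_fraction_ge)
  also have "prob {\<omega> \<in> space M. subsample Z {1..n div 2} \<omega> \<in> selecting k} = sel_prob M S Z k (n div 2)"
    unfolding sel_prob_def using subsample_in_selecting_iff[of "{1..n div 2}"]
    by (intro arg_cong[where f=prob]) auto
  finally show ?thesis .
qed

lemma prob_not_cpss_le:
  assumes \<tau>: "\<tau> < 1/2" and k: "k \<in> {1..p}"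
  shows "prob {\<omega> \<in> space M. k \<in> {1..p} - cpss p S Z A B \<tau> \<omega>}
       \<le> (prob {\<omega> \<in> space M. k \<in> {1..p} - subsample_sel S Z {1..n div 2} \<omega>})^2 / (1 - 2*\<tau>)"
proof -
  define F where "F = space (PiM {..<n div 2} (\<lambda>_. N)) - selecting k"
  have F_sets: "F \<in> sets (PiM {..<n div 2} (\<lambda>_. N))"
    using sets_selecting by (simp add: F_def sets.Diff)
  \<comment> \<open>\<open>\<Pi>_B(k) < \<tau>\<close>: more than a fraction \<open>1 - \<tau> > 1/2\<close> of the subsamples do not select \<open>k\<close>\<close>
  have "{\<omega> \<in> space M. k \<in> {1..p} - cpss p S Z A B \<tau> \<omega>} \<subseteq> {\<omega> \<in> space M. 1 - \<tau> \<le> subsample_fraction F \<omega>}"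
    using cpss_iff subsample_fraction_compl by (auto simp: F_def)
  then have "prob {\<omega> \<in> space M. k \<in> {1..p} - cpss p S Z A B \<tau> \<omega>}
      \<le> prob {\<omega> \<in> space M. 1 - \<tau> \<le> subsample_fraction F \<omega>}"
    using F_sets by (intro finite_measure_mono events_subsample_fraction_ge)
  also have "\<dots> \<le> (prob {\<omega> \<in> space M. subsample Z {1..n div 2} \<omega> \<in> F})^2 / (2*(1 - \<tau>) - 1)"
    using \<tau> F_sets by (intro prob_subsample_fraction_ge) auto
  also have "{\<omega> \<in> space M. subsample Z {1..n div 2} \<omega> \<in> F}
      = {\<omega> \<in> space M. k \<in> {1..p} - subsample_sel S Z {1..n div 2} \<omega>}"
    using k measurable_space[OF measurable_subsample[of "{1..n div 2}"]] subsample_in_selecting_iff[of "{1..n div 2}"]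
    by (auto simp: F_def)
  finally show ?thesis
    by simp
qed

lemma expectation_cpss_L_set_le:
  assumes "1/2 < \<tau>"
  shows "(\<integral>\<omega>. real (card (cpss p S Z A B \<tau> \<omega> \<inter> L_set M S Z n p \<theta>)) \<partial>M)
       \<le> \<theta> / (2*\<tau> - 1) * (\<integral>\<omega>. real (card (subsample_sel S Z {1..n div 2} \<omega> \<inter> L_set M S Z n p \<theta>)) \<partial>M)"
  using assms prob_cpss_le
  by (intro expectation_card_Int_le events_cpss events_subsample_sel)
    (auto simp: L_set_def sel_prob_def)

lemma expectation_not_cpss_H_set_le:
  assumes "\<tau> < 1/2"
  shows "(\<integral>\<omega>. real (card (({1..p} - cpss p S Z A B \<tau> \<omega>) \<inter> H_set M S Z n p \<theta>)) \<partial>M)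
       \<le> (1 - \<theta>) / (1 - 2*\<tau>) *
         (\<integral>\<omega>. real (card (({1..p} - subsample_sel S Z {1..n div 2} \<omega>) \<inter> H_set M S Z n p \<theta>)) \<partial>M)"
proof (rule expectation_card_Int_le)
  fix k assume k: "k \<in> H_set M S Z n p \<theta>"
  then have k_p: "k \<in> {1..p}"
    by (simp add: H_set_def)
  have compl: "{\<omega> \<in> space M. k \<in> {1..p} - C \<omega>} = space M - {\<omega> \<in> space M. k \<in> C \<omega>}" for C :: "'a \<Rightarrow> nat set"
    using k_p by auto
  show "{\<omega> \<in> space M. k \<in> {1..p} - cpss p S Z A B \<tau> \<omega>} \<in> events"
    unfolding compl using events_cpss by auto
  show "{\<omega> \<in> space M. k \<in> {1..p} - subsample_sel S Z {1..n div 2} \<omega>} \<in> events"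
    unfolding compl using events_subsample_sel by auto
  show "prob {\<omega> \<in> space M. k \<in> {1..p} - cpss p S Z A B \<tau> \<omega>}
      \<le> (prob {\<omega> \<in> space M. k \<in> {1..p} - subsample_sel S Z {1..n div 2} \<omega>})^2 / (1 - 2*\<tau>)"
    using assms k_p by (rule prob_not_cpss_le)
  show "prob {\<omega> \<in> space M. k \<in> {1..p} - subsample_sel S Z {1..n div 2} \<omega>} \<le> 1 - \<theta>"
    using k prob_compl[OF events_subsample_sel] unfolding compl by (simp add: H_set_def sel_prob_def)
qed (use assms in \<open>auto simp: H_set_def\<close>)

end

theorem theorem1:
  fixes M :: "'a measure" and N :: "'b measure"
    and Z :: "nat \<Rightarrow> 'a \<Rightarrow> 'b"
    and S :: "nat \<Rightarrow> (nat \<Rightarrow> 'b) \<Rightarrow> nat set"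
    and A :: "nat \<Rightarrow> 'a \<Rightarrow> nat set"
    and n p B :: nat and \<theta> \<tau> :: real
  assumes M: "prob_space M"
    and n: "n \<ge> 2" and p: "p \<ge> 1" and B: "B \<ge> 1"
    and \<theta>: "0 \<le> \<theta>" "\<theta> \<le> 1"
    \<comment> \<open>Z_1,...,Z_n i.i.d.\<close>
    and Z_meas: "\<And>i. i \<in> {1..n} \<Longrightarrow> Z i \<in> measurable M N"
    and Z_indep: "prob_space.indep_vars M (\<lambda>_. N) Z {1..n}"
    and Z_ident: "\<And>i. i \<in> {1..n} \<Longrightarrow> distr M N (Z i) = distr M N (Z 1)"
    \<comment> \<open>selection procedure: measurable statistics with values in subsets of {1..p}\<close>
    and S_range: "\<And>m z. S m z \<subseteq> {1..p}"
    and S_meas: "\<And>m k. (\<lambda>z. k \<in> S m z) \<in> measurable (PiM {..<m} (\<lambda>_. N)) (count_space UNIV)"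
    \<comment> \<open>random complementary pairs of subsets of size floor(n/2)\<close>
    and A_meas: "\<And>j. j \<in> {1..2*B} \<Longrightarrow> A j \<in> measurable M (count_space UNIV)"
    and A_sub: "\<And>j \<omega>. j \<in> {1..2*B} \<Longrightarrow> \<omega> \<in> space M \<Longrightarrow> A j \<omega> \<subseteq> {1..n}"
    and A_card: "\<And>j \<omega>. j \<in> {1..2*B} \<Longrightarrow> \<omega> \<in> space M \<Longrightarrow> card (A j \<omega>) = n div 2"
    and A_disj: "\<And>j \<omega>. j \<in> {1..B} \<Longrightarrow> \<omega> \<in> space M \<Longrightarrow> A (2*j - 1) \<omega> \<inter> A (2*j) \<omega> = {}"
    and A_pairs_indep: "prob_space.indep_vars M (\<lambda>_. count_space UNIV)
                          (\<lambda>j \<omega>. (A (2*j - 1) \<omega>, A (2*j) \<omega>)) {1..B}"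
    and A_Z_indep: "indep_rv M
                      (PiM {1..n} (\<lambda>_. N)) (\<lambda>\<omega>. \<lambda>i\<in>{1..n}. Z i \<omega>)
                      (PiM {1..2*B} (\<lambda>_. count_space UNIV)) (\<lambda>\<omega>. \<lambda>j\<in>{1..2*B}. A j \<omega>)"
  shows "(\<tau> \<in> {1/2<..1} \<longrightarrow>
            (\<integral>\<omega>. real (card (cpss p S Z A B \<tau> \<omega> \<inter> L_set M S Z n p \<theta>)) \<partial>M)
            \<le> \<theta> / (2*\<tau> - 1) *
              (\<integral>\<omega>. real (card (subsample_sel S Z {1..n div 2} \<omega> \<inter> L_set M S Z n p \<theta>)) \<partial>M))
       \<and> (\<tau> \<in> {0..<1/2} \<longrightarrow>
            (\<integral>\<omega>. real (card (({1..p} - cpss p S Z A B \<tau> \<omega>) \<inter> H_set M S Z n p \<theta>)) \<partial>M)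
            \<le> (1 - \<theta>) / (1 - 2*\<tau>) *
              (\<integral>\<omega>. real (card (({1..p} - subsample_sel S Z {1..n div 2} \<omega>) \<inter> H_set M S Z n p \<theta>)) \<partial>M))"
  \<comment> \<open>only linearity of expectation over the pairs is used\<close>
proof -
  interpret cpss_setting M N Z n A B S
    by (intro cpss_setting.intro complementary_subsamples.intro complementary_subsamples_axioms.intro
        iid_sample.intro iid_sample_axioms.intro cpss_setting_axioms.intro)
      (fact M n B Z_meas Z_indep Z_ident S_meas A_meas A_sub A_card A_disj A_Z_indep)+
  show ?thesis
    using expectation_cpss_L_set_le[of \<tau> p \<theta>] expectation_not_cpss_H_set_le[of \<tau> p \<theta>] by auto
qed

end
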